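(* Let $\psi$ be a real function defined on a set containing $(-\infty,0]$ with $\psi \in \mathrm{BT}(\mathbb{R}_-)$. Then $$\{\mathrm{id} - f : f \in \mathrm{Sol}(\psi)\} = \mathrm{Sol}(\mathrm{id}-\psi) \quad\text{and}\quad \{\mathrm{id} - f : f \in \mathrm{Sol}^\#(\psi)\} = \mathrm{Sol}^\#(\mathrm{id}-\psi),$$ where $\mathrm{id} - f$ denotes $x \mapsto x - f(x)$.
   Context: $\mathbb{R}_- = (-\infty,0]$. For $I \in \{\mathbb{R}_-, \mathbb{R}\}$ and $g : D \subseteq \mathbb{R} \to \mathbb{R}$, $g \in \mathrm{BT}(I)$ means $I \subseteq D$ and $xg(x) \ge 0$, $x(x-g(x)) \ge 0$ for all $x \in I$; $g \in \mathrm{BT}^\#(I)$ means additionally both inequalities are strict for $x \in I$, $x \ne 0$ (nothing is required of $g(0)$). For $\psi \in \mathrm{BT}(\mathbb{R}_-)$, $\mathrm{Sol}(\psi)$ is the set of functions $f \in \mathrm{BT}(\mathbb{R})$ such that $f(x) = \psi(x)$ for all $x \le 0$ and $f(f(-x)+x) = f(-f(x)) + f(x)$ for all $x \in \mathbb{R}$; $\mathrm{Sol}^\#(\psi) := \mathrm{Sol}(\psi) \cap \mathrm{BT}^\#(\mathbb{R})$. *)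

theory Defs
  imports Complex_Main
begin

definition Rminus :: "real set" where
  "Rminus = {..0}"

definition BT :: "real set \<Rightarrow> (real \<Rightarrow> real) \<Rightarrow> bool" where
  "BT I g \<longleftrightarrow> (\<forall>x\<in>I. x * g x \<ge> 0 \<and> x * (x - g x) \<ge> 0)"

definition BT_sharp :: "real set \<Rightarrow> (real \<Rightarrow> real) \<Rightarrow> bool" where
  "BT_sharp I g \<longleftrightarrow> BT I g \<and>
     (\<forall>x\<in>I. x \<noteq> 0 \<longrightarrow> x * g x > 0 \<and> x * (x - g x) > 0)"

definition Sol :: "(real \<Rightarrow> real) \<Rightarrow> (real \<Rightarrow> real) set" where
  "Sol \<psi> = {f. BT UNIV f \<and> (\<forall>x\<le>0. f x = \<psi> x) \<and>
                (\<forall>x. f (f (-x) + x) = f (- f x) + f x)}"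

definition Sol_sharp :: "(real \<Rightarrow> real) \<Rightarrow> (real \<Rightarrow> real) set" where
  "Sol_sharp \<psi> = Sol \<psi> \<inter> {f. BT_sharp UNIV f}"

end

theory Submission
  imports Defs
begin

text \<open>The map \<open>f \<mapsto> id - f\<close> is an involution that swaps the two inequalities
  \<open>x f(x) \<ge> 0\<close> and \<open>x (x - f(x)) \<ge> 0\<close>, and it carries the functional equation for \<open>f\<close> at \<open>-x\<close>
  to the functional equation for \<open>id - f\<close> at \<open>x\<close>. Hence it maps \<open>Sol \<psi>\<close> into
  \<open>Sol (id - \<psi>)\<close> for every \<open>\<psi>\<close>, and applying this twice gives equality.\<close>

lemma image_involution_eq:
  assumes involution: "\<And>x. h (h x) = x"
    and maps_into: "\<And>a. h ` S a \<subseteq> S (h a)"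
  shows "h ` S a = S (h a)"
proof
  show "h ` S a \<subseteq> S (h a)" by (rule maps_into)
  have "h ` S (h a) \<subseteq> S a"
    using maps_into[of "h a"] by (simp add: involution)
  then have "h ` h ` S (h a) \<subseteq> h ` S a" by (rule image_mono)
  then show "S (h a) \<subseteq> h ` S a"
    by (simp add: image_image involution)
qed

lemma BT_diff_iff: "BT I (\<lambda>x. x - g x) \<longleftrightarrow> BT I g"
  by (auto simp: BT_def)

lemma BT_sharp_diff_iff: "BT_sharp I (\<lambda>x. x - g x) \<longleftrightarrow> BT_sharp I g"
  by (auto simp: BT_sharp_def BT_def)

lemma Sol_diff:
  assumes "f \<in> Sol \<psi>"
  shows "(\<lambda>x. x - f x) \<in> Sol (\<lambda>x. x - \<psi> x)"
proof -
  have BT: "BT UNIV f" and extends: "\<forall>x\<le>0. f x = \<psi> x"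
    and equation: "\<And>x. f (f (-x) + x) = f (- f x) + f x"
    using assms by (auto simp: Sol_def)
  have "let g = \<lambda>x. x - f x in g (g (-x) + x) = g (- g x) + g x" for x
    using equation[of "- x"] by (simp add: algebra_simps)
  then show ?thesis
    using BT extends by (simp add: Sol_def BT_diff_iff)
qed

lemma Sol_sharp_diff:
  assumes "f \<in> Sol_sharp \<psi>"
  shows "(\<lambda>x. x - f x) \<in> Sol_sharp (\<lambda>x. x - \<psi> x)"
  using assms Sol_diff by (simp add: Sol_sharp_def BT_sharp_diff_iff)

theorem proposition1:
  fixes \<psi> :: "real \<Rightarrow> real"
  assumes "BT Rminus \<psi>"
  shows "(\<lambda>f x. x - f x) ` Sol \<psi> = Sol (\<lambda>x. x - \<psi> x)
       \<and> (\<lambda>f x. x - f x) ` Sol_sharp \<psi> = Sol_sharp (\<lambda>x. x - \<psi> x)"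
proof -
  have involution: "(\<lambda>x. x - (x - g x)) = g" for g :: "real \<Rightarrow> real"
    by simp
  show ?thesis
    using image_involution_eq[where h = "\<lambda>f x. x - f x" and S = Sol]
      image_involution_eq[where h = "\<lambda>f x. x - f x" and S = Sol_sharp]
    by (simp add: involution image_subset_iff Sol_diff Sol_sharp_diff)
qed

end
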